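(* Consider the Histogram Partitioning algorithm (described in the context) on $N$ distinct keys over $p$ processors, where in each round $j$ each key of $\gamma_j$ is sampled independently with probability $\frac{3p}{|\gamma_j|\log^* p}$. Then, with high probability, after $O(\log^* p)$ rounds fewer than $p/\log^* p$ splitters remain unachieved.
   Context: Setting: $N$ distinct keys from a totally ordered set are distributed across $p$ processors, $N/p$ keys per processor. For $\ell\in\{1,\dots,p-1\}$, the target range of splitter $\ell$ is the rank range $[\frac{N\ell}{p},\frac{N\ell}{p}+\frac{N}{p}]$; splitter $\ell$ is achieved in a round if some key with rank in this range is sampled in that round (and stays achieved afterwards). Histogram Partitioning proceeds in rounds; in round $j$, keys are sampled independently from a set $\gamma_j$ ($\gamma_1$ = all keys), and the global ranks of the samples are computed and made known to all processors. For each unachieved splitter $\ell$, $L_j(\ell)$ is the largest key sampled before round $j$ with rank below $\frac{N\ell}{p}$ (or the smallest key) and $U_j(\ell)$ the smallest key sampled before round $j$ with rank above $\frac{N\ell}{p}+\frac{N}{p}$ (or the largest key); $\gamma_j$ is the union over splitters $\ell$ unachieved before round $j$ of the keys between $L_j(\ell)$ and $U_j(\ell)$. $\log^* x=0$ for $x\le1$ and $\log^* x=1+\log^*(\log x)$ for $x>1$. "With high probability" means with probability tending to $1$ as $p\to\infty$. *)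

theory Defs
  imports "HOL-Probability.Probability"
begin

text \<open>Iterated logarithm (base 2): the least k such that k-fold application of log 2
  brings x to at most 1.  This is the unfolding of
  log* x = 0 for x \<le> 1 and log* x = 1 + log*(log x) for x > 1.\<close>
definition logstar :: "real \<Rightarrow> nat" where
  "logstar x = (LEAST k. ((\<lambda>y. log 2 y) ^^ k) x \<le> 1)"

text \<open>Keys are identified with their ranks 1..N.  S is the set of keys sampled so far.\<close>

definition achieved :: "nat \<Rightarrow> nat \<Rightarrow> nat set \<Rightarrow> nat \<Rightarrow> bool" where
  "achieved N p S l \<longleftrightarrow>
     (\<exists>x\<in>S. real N * l / p \<le> x \<and> real x \<le> real N * l / p + real N / p)"

definition unachieved :: "nat \<Rightarrow> nat \<Rightarrow> nat set \<Rightarrow> nat set" where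
  "unachieved N p S = {l \<in> {1..<p}. \<not> achieved N p S l}"

definition lower_bd :: "nat \<Rightarrow> nat \<Rightarrow> nat set \<Rightarrow> nat \<Rightarrow> nat" where
  "lower_bd N p S l = Max ({x \<in> S. real x < real N * l / p} \<union> {1})"

definition upper_bd :: "nat \<Rightarrow> nat \<Rightarrow> nat set \<Rightarrow> nat \<Rightarrow> nat" where
  "upper_bd N p S l = Min ({x \<in> S. real x > real N * l / p + real N / p} \<union> {N})"

definition gamma :: "nat \<Rightarrow> nat \<Rightarrow> nat set \<Rightarrow> nat set" where
  "gamma N p S = (\<Union>l\<in>unachieved N p S. {lower_bd N p S l .. upper_bd N p S l})"

definition hp_round :: "nat \<Rightarrow> nat \<Rightarrow> nat set \<Rightarrow> nat set pmf" where
  "hp_round N p S =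
     (let G = gamma N p S;
          q = min 1 (3 * real p / (real (card G) * real (logstar (real p))))
      in map_pmf (\<lambda>f. S \<union> {x \<in> G. f x}) (Pi_pmf G False (\<lambda>_. bernoulli_pmf q)))"

fun hp_rounds :: "nat \<Rightarrow> nat \<Rightarrow> nat \<Rightarrow> nat set pmf" where
  "hp_rounds N p 0 = return_pmf {}"
| "hp_rounds N p (Suc k) = bind_pmf (hp_rounds N p k) (hp_round N p)"

end

theory Submission
  imports Defs "HOL-Real_Asymp.Real_Asymp"
begin

(* While u >= p / log* p splitters are unachieved, each of them owns the n = N / p keys of its
   target range; these blocks are disjoint and lie in gamma, and |gamma| <= 4 n u since every key
   of gamma lies within distance n of the target range of an unachieved splitter.  So every key is
   sampled with probability q >= 3 p / (4 n u log* p), and the number of unachieved splitters whose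
   block stays unsampled has mean u (1 - q)^n <= u - 3 p / (7 log* p).  The blocks are sampled
   independently, so by Chebyshev the number of unachieved splitters drops by p / (4 log* p) in
   each round, except with probability 64 (log* p)^2 / p.  After 4 log* p rounds it is below
   p / log* p, except with probability 256 (log* p)^3 / p, which tends to 0. *)

lemma prob_bind_pmf_le:
  assumes "\<And>x. x \<in> set_pmf M \<Longrightarrow> x \<notin> B \<Longrightarrow> measure_pmf.prob (K x) A \<le> d" and "d \<ge> 0"
  shows "measure_pmf.prob (bind_pmf M K) A \<le> measure_pmf.prob M B + d"
proof -
  have "measure_pmf.prob (bind_pmf M K) A = measure_pmf.expectation M (\<lambda>x. measure_pmf.prob (K x) A)"
    unfolding measure_pmf_bind
    by (rule measure_pmf.measure_bind[where N = "count_space UNIV"])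
       (auto simp: space_subprob_algebra intro: prob_space_imp_subprob_space measure_pmf.prob_space_axioms)
  also have "\<dots> \<le> measure_pmf.expectation M (\<lambda>x. indicator B x + d)"
  proof (rule integral_mono_AE)
    show "integrable M (\<lambda>x. measure_pmf.prob (K x) A)"
      by (rule measure_pmf.integrable_const_bound[where B = 1]) auto
    show "integrable M (\<lambda>x. indicator B x + d)"
      by (rule measure_pmf.integrable_const_bound[where B = "1 + \<bar>d\<bar>"]) (auto simp: indicator_def)
    show "AE x in M. measure_pmf.prob (K x) A \<le> indicator B x + d"
      using assms
      by (intro AE_pmfI) (auto simp: indicator_def intro: order.trans[OF measure_pmf.prob_le_1])
  qed
  also have "\<dots> = measure_pmf.prob M B + d"
    by (subst Bochner_Integration.integral_add)
       (auto simp: indicator_def intro!: measure_pmf.integrable_const_bound[where B = 1])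
  finally show ?thesis .
qed

lemma prob_drift_failure_le:
  fixes M :: "nat \<Rightarrow> 'a pmf" and V :: "'a \<Rightarrow> real"
  assumes M_Suc: "\<And>j. M (Suc j) = bind_pmf (M j) K"
    and start: "\<And>x. x \<in> set_pmf (M 0) \<Longrightarrow> V x \<le> a"
    and step: "\<And>j x b. x \<in> set_pmf (M j) \<Longrightarrow> V x \<le> b \<or> V x < c \<Longrightarrow>
                 measure_pmf.prob (K x) {y. b - \<delta> < V y \<and> c \<le> V y} \<le> \<epsilon>"
    and "\<epsilon> \<ge> 0"
  shows "measure_pmf.prob (M j) {x. a - j * \<delta> < V x \<and> c \<le> V x} \<le> j * \<epsilon>"
proof (induction j)
  case 0
  have "measure_pmf.prob (M 0) {x. a < V x \<and> c \<le> V x} = 0"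
    using start by (subst measure_pmf_zero_iff) force
  then show ?case by simp
next
  case (Suc j)
  have "measure_pmf.prob (M (Suc j)) {x. a - Suc j * \<delta> < V x \<and> c \<le> V x}
        \<le> measure_pmf.prob (M j) {x. a - j * \<delta> < V x \<and> c \<le> V x} + \<epsilon>"
    unfolding M_Suc
  proof (rule prob_bind_pmf_le)
    fix x assume "x \<in> set_pmf (M j)" "x \<notin> {x. a - j * \<delta> < V x \<and> c \<le> V x}"
    then show "measure_pmf.prob (K x) {y. a - Suc j * \<delta> < V y \<and> c \<le> V y} \<le> \<epsilon>"
      using step[of x j "a - j * \<delta>"] by (auto simp: algebra_simps)
  qed fact
  with Suc.IH show ?case by (simp add: algebra_simps)
qed

lemma prob_Pi_pmf_bernoulli_all_False:
  assumes "finite G" and "A \<subseteq> G" and "0 \<le> q" and "q \<le> 1"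
  shows "measure_pmf.prob (Pi_pmf G d (\<lambda>_. bernoulli_pmf q)) {f. \<forall>x\<in>A. \<not> f x} = (1 - q) ^ card A"
proof -
  have "{f. \<forall>x\<in>A. \<not> f x} = Pi G (\<lambda>x. if x \<in> A then {False} else UNIV)"
    using assms(2) by (auto simp: Pi_def)
  then have "measure_pmf.prob (Pi_pmf G d (\<lambda>_. bernoulli_pmf q)) {f. \<forall>x\<in>A. \<not> f x}
      = (\<Prod>x\<in>G. measure_pmf.prob (bernoulli_pmf q) (if x \<in> A then {False} else UNIV))"
    by (simp add: measure_Pi_pmf_Pi assms(1))
  also have "\<dots> = (\<Prod>x\<in>G. if x \<in> A then 1 - q else 1)"
    using assms(3,4) by (intro prod.cong) (auto simp: measure_pmf_single)
  also have "\<dots> = (1 - q) ^ card A"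
    using assms(1,2) by (simp add: prod.inter_restrict[symmetric] Int_absorb1)
  finally show ?thesis .
qed

lemma prob_count_events_ge:
  fixes M :: "'a pmf" and E :: "'b \<Rightarrow> 'a set"
  assumes "finite U" and "t > 0"
    and uncorrelated: "\<And>l m. l \<in> U \<Longrightarrow> m \<in> U \<Longrightarrow> l \<noteq> m \<Longrightarrow>
       measure_pmf.prob M (E l \<inter> E m) = measure_pmf.prob M (E l) * measure_pmf.prob M (E m)"
  shows "measure_pmf.prob M {x. (\<Sum>l\<in>U. measure_pmf.prob M (E l)) + t \<le> card {l\<in>U. x \<in> E l}}
           \<le> card U / t\<^sup>2"
proof -
  define P where "P l = measure_pmf.prob M (E l)" for l
  define X where "X x = (\<Sum>l\<in>U. indicator (E l) x :: real)" for x
  have integrable_indicator: "integrable M (indicator A :: _ \<Rightarrow> real)" for A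
    by (rule measure_pmf.integrable_const_bound[where B = 1]) (auto simp: indicator_def)
  have integrable_X: "integrable M X" and integrable_X2: "integrable M (\<lambda>x. (X x)\<^sup>2)"
    unfolding X_def power2_eq_square sum_product indicator_inter_arith[symmetric]
    by (auto intro!: integrable_indicator)
  have EX: "measure_pmf.expectation M X = (\<Sum>l\<in>U. P l)"
    unfolding X_def P_def by (subst Bochner_Integration.integral_sum) (auto intro: integrable_indicator)
  have "measure_pmf.expectation M (\<lambda>x. (X x)\<^sup>2) = (\<Sum>l\<in>U. \<Sum>m\<in>U. measure_pmf.prob M (E l \<inter> E m))"
    unfolding X_def power2_eq_square sum_product indicator_inter_arith[symmetric]
    by (simp add: Bochner_Integration.integral_sum integrable_indicator)
  also have "\<dots> = (\<Sum>l\<in>U. \<Sum>m\<in>U. P l * P m + (if l = m then P l - (P l)\<^sup>2 else 0))"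
    using uncorrelated by (intro sum.cong refl) (auto simp: P_def power2_eq_square)
  also have "\<dots> = (\<Sum>l\<in>U. P l)\<^sup>2 + (\<Sum>l\<in>U. P l - (P l)\<^sup>2)"
    using \<open>finite U\<close> by (simp add: sum.distrib power2_eq_square sum_product)
  finally have "measure_pmf.variance M X = (\<Sum>l\<in>U. P l - (P l)\<^sup>2)"
    by (subst measure_pmf.variance_eq[OF integrable_X integrable_X2]) (simp add: EX)
  also have "\<dots> \<le> (\<Sum>l\<in>U. 1)"
  proof (intro sum_mono)
    fix l
    have "P l \<le> 1" by (simp add: P_def)
    then show "P l - (P l)\<^sup>2 \<le> 1" using zero_le_power2[of "P l"] by linarith
  qed
  finally have variance: "measure_pmf.variance M X \<le> card U" by simp
  have "measure_pmf.prob M {x. (\<Sum>l\<in>U. P l) + t \<le> X x}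
        \<le> measure_pmf.prob M {x \<in> space M. t \<le> \<bar>X x - measure_pmf.expectation M X\<bar>}"
    by (rule measure_pmf.finite_measure_mono) (auto simp: EX)
  also have "\<dots> \<le> measure_pmf.variance M X / t\<^sup>2"
    by (rule measure_pmf.Chebyshev_inequality) (auto simp: integrable_X2 \<open>t > 0\<close>)
  also have "\<dots> \<le> card U / t\<^sup>2"
    using variance by (simp add: divide_right_mono)
  finally show ?thesis
    using \<open>finite U\<close> by (simp add: X_def P_def indicator_def Collect_conj_eq Int_commute)
qed

lemma prob_many_blocks_unsampled:
  fixes B :: "'b \<Rightarrow> 'a set" and q t :: real
  assumes "finite G" and "finite U" and "0 < t" and "0 \<le> q" and "q \<le> 1"
    and B_subset: "\<And>l. l \<in> U \<Longrightarrow> B l \<subseteq> G" and card_B: "\<And>l. l \<in> U \<Longrightarrow> card (B l) = n"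
    and disjoint: "\<And>l m. l \<in> U \<Longrightarrow> m \<in> U \<Longrightarrow> l \<noteq> m \<Longrightarrow> B l \<inter> B m = {}"
  shows "measure_pmf.prob (Pi_pmf G d (\<lambda>_. bernoulli_pmf q))
           {f. card U * (1 - q) ^ n + t \<le> card {l\<in>U. \<forall>x\<in>B l. \<not> f x}} \<le> card U / t\<^sup>2"
proof -
  let ?M = "Pi_pmf G d (\<lambda>_. bernoulli_pmf q)"
  define E where "E l = {f. \<forall>x\<in>B l. \<not> f x}" for l
  have prob_E: "measure_pmf.prob ?M (E l) = (1 - q) ^ n" if "l \<in> U" for l
    using prob_Pi_pmf_bernoulli_all_False[OF \<open>finite G\<close> B_subset[OF that] \<open>0 \<le> q\<close> \<open>q \<le> 1\<close>] card_B[OF that]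
    by (simp add: E_def)
  have "measure_pmf.prob ?M (E l \<inter> E m) = measure_pmf.prob ?M (E l) * measure_pmf.prob ?M (E m)"
    if "l \<in> U" and "m \<in> U" and "l \<noteq> m" for l m
  proof -
    have "E l \<inter> E m = {f. \<forall>x\<in>B l \<union> B m. \<not> f x}"
      by (auto simp: E_def)
    moreover have "card (B l \<union> B m) = n + n"
      using disjoint[OF that] B_subset card_B that finite_subset[OF _ \<open>finite G\<close>]
      by (simp add: card_Un_disjoint)
    ultimately show ?thesis
      using prob_Pi_pmf_bernoulli_all_False[OF \<open>finite G\<close> _ \<open>0 \<le> q\<close> \<open>q \<le> 1\<close>, of "B l \<union> B m"]
        B_subset that prob_E by (simp add: power_add)
  qed
  then have "measure_pmf.prob ?M {f. (\<Sum>l\<in>U. measure_pmf.prob ?M (E l)) + t \<le> card {l\<in>U. f \<in> E l}}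
      \<le> card U / t\<^sup>2"
    by (intro prob_count_events_ge \<open>finite U\<close> \<open>0 < t\<close>)
  moreover have "(\<Sum>l\<in>U. measure_pmf.prob ?M (E l)) = card U * (1 - q) ^ n"
    using prob_E by simp
  ultimately show ?thesis
    by (simp add: E_def)
qed

lemma one_minus_power_le_inverse:
  fixes q :: real
  assumes "0 \<le> q" and "q \<le> 1"
  shows "(1 - q) ^ n \<le> 1 / (1 + n * q)"
proof -
  have "(1 - q) ^ n * (1 + n * q) \<le> (1 - q) ^ n * (1 + q) ^ n"
    using assms by (intro mult_left_mono Bernoulli_inequality) auto
  also have "\<dots> = (1 - q\<^sup>2) ^ n"
    by (simp add: power_mult_distrib[symmetric] power2_eq_square algebra_simps)
  also have "\<dots> \<le> 1"
    using assms by (intro power_le_one) (auto simp: power_le_one)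
  finally have "(1 - q) ^ n * (1 + n * q) \<le> 1" .
  moreover have "0 < 1 + n * q"
    using assms by (simp add: add_pos_nonneg)
  ultimately show ?thesis
    by (simp add: le_divide_eq)
qed

lemma mult_one_minus_power_le:
  fixes u c q :: real
  assumes "0 \<le> q" and "q \<le> 1" and "0 < c" and "c \<le> u" and rate: "3 * c / (4 * u) \<le> n * q"
  shows "u * (1 - q) ^ n \<le> u - 3 * c / 7"
proof -
  define z where "z = 3 * c / (4 * u)"
  have "0 < z" and "z \<le> 3 / 4"
    using assms(3,4) by (auto simp: z_def field_simps)
  have "(1 - q) ^ n \<le> 1 / (1 + n * q)"
    using assms(1,2) by (rule one_minus_power_le_inverse)
  also have "\<dots> \<le> 1 / (1 + z)"
    using rate \<open>0 < z\<close> by (intro divide_left_mono) (auto simp: z_def)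
  finally have "u * (1 - q) ^ n \<le> u / (1 + z)"
    using assms(3,4) by (simp add: mult_left_mono divide_inverse)
  also have "\<dots> \<le> u - 3 * c / 7"
    using \<open>0 < z\<close> \<open>z \<le> 3 / 4\<close> assms(3,4) by (simp add: z_def field_simps)
  finally show ?thesis .
qed

lemma funpow_log_le_1_if_le_power:
  fixes y :: real
  assumes "y \<le> 2 ^ m"
  shows "\<exists>j\<le>m. ((\<lambda>y. log 2 y) ^^ j) y \<le> 1"
  using assms
proof (induction m arbitrary: y)
  case 0
  then show ?case by auto
next
  case (Suc m)
  have "real (Suc m) \<le> 2 ^ m"
    using of_nat_le_iff[of "Suc m" "2 ^ m", where 'a = real] less_exp[of m] by simp
  show ?case
  proof (cases "y \<le> 1")
    case True
    then show ?thesis by (intro exI[of _ 0]) auto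
  next
    case False
    then have "log 2 y \<le> log 2 (2 ^ Suc m)"
      using Suc.prems by (subst log_le_cancel_iff) auto
    also have "\<dots> \<le> 2 ^ m"
      using \<open>real (Suc m) \<le> 2 ^ m\<close> by (simp only: log_pow_cancel)
    finally obtain j where "j \<le> m" and "((\<lambda>y. log 2 y) ^^ j) (log 2 y) \<le> 1"
      using Suc.IH by blast
    then show ?thesis
      by (intro exI[of _ "Suc j"]) (simp add: funpow_Suc_right del: funpow.simps)
  qed
qed

lemma logstar_le_if_le_power:
  assumes "x \<le> 2 ^ m"
  shows "logstar x \<le> m"
proof -
  obtain j where "j \<le> m" and "((\<lambda>y. log 2 y) ^^ j) x \<le> 1"
    using funpow_log_le_1_if_le_power[OF assms] by blast
  then show ?thesis
    unfolding logstar_def using Least_le[of _ j] by fastforce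
qed

lemma logstar_ge_1:
  assumes "1 < x"
  shows "1 \<le> logstar x"
proof -
  obtain m where "x \<le> 2 ^ m"
    using real_arch_pow[of 2 x] by (auto intro: less_imp_le)
  then have "((\<lambda>y. log 2 y) ^^ logstar x) x \<le> 1"
    unfolding logstar_def by (metis funpow_log_le_1_if_le_power LeastI)
  then show ?thesis
    using assms by (cases "logstar x") auto
qed

lemma logstar_le_log:
  assumes "1 \<le> x"
  shows "logstar x \<le> log 2 x + 1"
proof -
  define m where "m = nat \<lceil>log 2 x\<rceil>"
  have "x = 2 powr log 2 x"
    using assms by simp
  also have "\<dots> \<le> 2 powr m"
    using assms by (intro powr_mono) (auto simp: m_def)
  finally have "logstar x \<le> m"
    by (intro logstar_le_if_le_power) (simp add: powr_realpow)
  moreover have "m \<le> log 2 x + 1"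
    using assms by (simp add: m_def)
  ultimately show ?thesis
    by linarith
qed

lemma unachieved_antimono: "S \<subseteq> S' \<Longrightarrow> unachieved N p S' \<subseteq> unachieved N p S"
  unfolding unachieved_def achieved_def by blast

lemma card_unachieved_le: "card (unachieved N p S) \<le> p"
proof -
  have "card (unachieved N p S) \<le> card {1..<p}"
    unfolding unachieved_def by (intro card_mono) auto
  then show ?thesis by simp
qed

lemma finite_gamma: "finite (gamma N p S)"
  unfolding gamma_def unachieved_def by auto

lemma blocks_disjoint:
  fixes n :: nat
  assumes "l \<noteq> m"
  shows "{n * l..<n * l + n} \<inter> {n * m..<n * m + n} = {}"
proof -
  have "x div n = k" if "x \<in> {n * k..<n * k + n}" for x k
    using that by (intro div_nat_eqI) auto
  then show ?thesis
    using assms by blast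
qed

context
  fixes n p :: nat
  assumes p_pos: "0 < p"
begin

lemma achieved_iff: "achieved (n * p) p S l \<longleftrightarrow> (\<exists>x\<in>S. n * l \<le> x \<and> x \<le> n * l + n)"
proof -
  have "real (n * p) * real l / real p = real (n * l)" and "real (n * p) / real p = real n"
    using p_pos by auto
  then show ?thesis
    unfolding achieved_def by (metis of_nat_add of_nat_le_iff)
qed

lemma mem_unachieved_iff:
  "l \<in> unachieved (n * p) p S \<longleftrightarrow> 1 \<le> l \<and> l < p \<and> (\<forall>s\<in>S. s < n * l \<or> n * l + n < s)"
  by (auto simp: unachieved_def achieved_iff)

lemma lower_bd_eq: "lower_bd (n * p) p S l = Max ({x\<in>S. x < n * l} \<union> {1})"
proof -
  have "real (n * p) * real l / real p = real (n * l)"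
    using p_pos by auto
  then show ?thesis
    unfolding lower_bd_def by (metis of_nat_less_iff)
qed

lemma upper_bd_eq: "upper_bd (n * p) p S l = Min ({x\<in>S. n * l + n < x} \<union> {n * p})"
proof -
  have "real (n * p) * real l / real p + real (n * p) / real p = real (n * l + n)"
    using p_pos by auto
  then show ?thesis
    unfolding upper_bd_def by (metis of_nat_less_iff)
qed

lemma sample_le_lower_bd:
  assumes "finite S" and "l \<in> unachieved (n * p) p S" and "s \<in> S" and "s \<le> n * l + n"
  shows "s \<le> lower_bd (n * p) p S l"
  using assms unfolding mem_unachieved_iff lower_bd_eq by (intro Max_ge) auto

lemma upper_bd_le_sample:
  assumes "finite S" and "l \<in> unachieved (n * p) p S" and "s \<in> S" and "n * l \<le> s"
  shows "upper_bd (n * p) p S l \<le> s"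
  using assms unfolding mem_unachieved_iff upper_bd_eq by (intro Min_le) auto

lemma upper_bd_le: "finite S \<Longrightarrow> upper_bd (n * p) p S l \<le> n * p"
  unfolding upper_bd_eq by (intro Min_le) auto

lemma block_subset_gamma:
  assumes "finite S" and l: "l \<in> unachieved (n * p) p S"
  shows "{n * l..<n * l + n} \<subseteq> gamma (n * p) p S"
proof (cases "n = 0")
  case False
  from l have "1 \<le> l" and "l < p"
    by (auto simp: mem_unachieved_iff)
  then have "1 \<le> n * l" and "n * l + n \<le> n * p"
    using False by (auto simp: add.commute[of _ n] simp flip: mult_Suc_right intro!: mult_le_mono2)
  then have "lower_bd (n * p) p S l \<le> n * l" and "n * l + n \<le> upper_bd (n * p) p S l"
    using \<open>finite S\<close> unfolding lower_bd_eq upper_bd_eq by auto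
  then show ?thesis
    using l unfolding gamma_def by force
qed simp

text \<open>No sample lies strictly between the bounds of an unachieved splitter, so a key of gamma
  below (above) its target range is close to the target range of an unachieved splitter further
  down (up).\<close>

lemma covered_if_below_target:
  assumes "finite S" and "0 < n" and l: "l \<in> unachieved (n * p) p S"
    and x_ge: "lower_bd (n * p) p S l \<le> x" and "x < n * l"
  shows "\<exists>l'\<in>unachieved (n * p) p S. x \<in> {n * (l' - 1)..n * (l' + 2)}"
proof
  define b where "b = x div n"
  have "n * b \<le> x" and "x < n * b + n"
    using dividend_less_times_div[OF \<open>0 < n\<close>, of x] by (auto simp: b_def)
  then have "b < l"
    using \<open>x < n * l\<close> by (meson le_less_trans mult_less_cancel1)
  show "Suc b \<in> unachieved (n * p) p S"
    unfolding mem_unachieved_iff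
  proof (intro conjI ballI)
    show "1 \<le> Suc b" and "Suc b < p"
      using \<open>b < l\<close> l by (auto simp: mem_unachieved_iff)
    fix s assume "s \<in> S"
    show "s < n * Suc b \<or> n * Suc b + n < s"
    proof (rule ccontr)
      assume "\<not> (s < n * Suc b \<or> n * Suc b + n < s)"
      moreover have "n * Suc b \<le> n * l"
        using \<open>b < l\<close> by (intro mult_le_mono2) simp
      ultimately have "x < s" and "s \<le> n * l + n"
        using \<open>x < n * b + n\<close> by auto
      then show False
        using sample_le_lower_bd[OF \<open>finite S\<close> l \<open>s \<in> S\<close>] x_ge by simp
    qed
  qed
  show "x \<in> {n * (Suc b - 1)..n * (Suc b + 2)}"
    using \<open>n * b \<le> x\<close> \<open>x < n * b + n\<close> by auto
qed

lemma covered_if_above_target: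
  assumes "finite S" and "0 < n" and l: "l \<in> unachieved (n * p) p S"
    and "n * l + n < x" and x_le: "x \<le> upper_bd (n * p) p S l"
  shows "\<exists>l'\<in>unachieved (n * p) p S. x \<in> {n * (l' - 1)..n * (l' + 2)}"
proof
  define b where "b = (x - 1) div n"
  have "n * b \<le> x - 1" and "x - 1 < n * b + n"
    using dividend_less_times_div[OF \<open>0 < n\<close>, of "x - 1"] by (auto simp: b_def)
  then have "n * b < x" and "x \<le> n * b + n"
    using \<open>n * l + n < x\<close> by auto
  then have "l < b"
    using \<open>n * l + n < x\<close> by (meson add_less_cancel_right le_less_trans mult_less_cancel1 not_le)
  have "n * b < n * p"
    using \<open>n * b < x\<close> x_le upper_bd_le[OF \<open>finite S\<close>, of l] by linarith
  show "b - 1 \<in> unachieved (n * p) p S"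
    unfolding mem_unachieved_iff
  proof (intro conjI ballI)
    show "1 \<le> b - 1" and "b - 1 < p"
      using \<open>l < b\<close> \<open>n * b < n * p\<close> l by (auto simp: mem_unachieved_iff)
    fix s assume "s \<in> S"
    show "s < n * (b - 1) \<or> n * (b - 1) + n < s"
    proof (rule ccontr)
      assume "\<not> (s < n * (b - 1) \<or> n * (b - 1) + n < s)"
      moreover have "n * l \<le> n * (b - 1)" and "n * (b - 1) + n = n * b"
        using \<open>l < b\<close> by (cases b; simp)+
      ultimately have "n * l \<le> s" and "s < x"
        using \<open>n * b < x\<close> by linarith+
      then show False
        using upper_bd_le_sample[OF \<open>finite S\<close> l \<open>s \<in> S\<close>] x_le by simp
    qed
  qed
  show "x \<in> {n * (b - 1 - 1)..n * (b - 1 + 2)}"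
    using \<open>n * b < x\<close> \<open>x \<le> n * b + n\<close> \<open>l < b\<close> by (auto simp: diff_mult_distrib2)
qed

lemma gamma_subset:
  assumes "finite S" and "0 < n"
  shows "gamma (n * p) p S \<subseteq> (\<Union>l\<in>unachieved (n * p) p S. {n * (l - 1)..n * (l + 2)})"
proof
  fix x assume "x \<in> gamma (n * p) p S"
  then obtain l where l: "l \<in> unachieved (n * p) p S"
    and "lower_bd (n * p) p S l \<le> x" and "x \<le> upper_bd (n * p) p S l"
    unfolding gamma_def by auto
  consider "x < n * l" | "n * l \<le> x" and "x \<le> n * l + n" | "n * l + n < x"
    by linarith
  then show "x \<in> (\<Union>l\<in>unachieved (n * p) p S. {n * (l - 1)..n * (l + 2)})"
  proof cases
    case 1
    then show ?thesis
      using covered_if_below_target[OF assms l \<open>lower_bd (n * p) p S l \<le> x\<close>] by blast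
  next
    case 2
    then have "x \<in> {n * (l - 1)..n * (l + 2)}"
      by (auto simp: diff_mult_distrib2)
    then show ?thesis
      using l by blast
  next
    case 3
    then show ?thesis
      using covered_if_above_target[OF assms l _ \<open>x \<le> upper_bd (n * p) p S l\<close>] by blast
  qed
qed

lemma card_gamma_le:
  assumes "finite S" and "0 < n"
  shows "card (gamma (n * p) p S) \<le> 4 * n * card (unachieved (n * p) p S)"
proof -
  let ?U = "unachieved (n * p) p S"
  have "finite ?U"
    unfolding unachieved_def by auto
  have "card (gamma (n * p) p S) \<le> card (\<Union>l\<in>?U. {n * (l - 1)..n * (l + 2)})"
    using \<open>finite ?U\<close> by (intro card_mono gamma_subset assms) auto
  also have "\<dots> \<le> (\<Sum>l\<in>?U. card {n * (l - 1)..n * (l + 2)})"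
    by (rule card_UN_le[OF \<open>finite ?U\<close>])
  also have "\<dots> \<le> (\<Sum>l\<in>?U. 4 * n)"
  proof (rule sum_mono)
    fix l assume "l \<in> ?U"
    then have "n * (l + 2) = n * (l - 1) + 3 * n"
      by (auto simp: mem_unachieved_iff algebra_simps diff_mult_distrib2)
    then show "card {n * (l - 1)..n * (l + 2)} \<le> 4 * n"
      using \<open>0 < n\<close> by simp
  qed
  finally show ?thesis
    by (simp add: mult.commute)
qed


lemma unachieved_after_sampling_subset:
  assumes "finite S"
  shows "unachieved (n * p) p (S \<union> {x \<in> gamma (n * p) p S. f x})
           \<subseteq> {l \<in> unachieved (n * p) p S. \<forall>x\<in>{n * l..<n * l + n}. \<not> f x}"
proof safe
  fix l assume l: "l \<in> unachieved (n * p) p (S \<union> {x \<in> gamma (n * p) p S. f x})"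
  then show l_old: "l \<in> unachieved (n * p) p S"
    using unachieved_antimono[of S] by blast
  fix x assume "x \<in> {n * l..<n * l + n}" and "f x"
  then have "x \<in> S \<union> {x \<in> gamma (n * p) p S. f x}"
    using block_subset_gamma[OF assms l_old] by blast
  with \<open>x \<in> {n * l..<n * l + n}\<close> have "achieved (n * p) p (S \<union> {x \<in> gamma (n * p) p S. f x}) l"
    unfolding achieved_iff by force
  with l show False
    by (simp add: unachieved_def)
qed

lemma sampling_rate_ge:
  fixes L :: real
  assumes "finite S" and "0 < n" and "0 < L" and many: "p / L \<le> card (unachieved (n * p) p S)"
  shows "3 * (p / L) / (4 * card (unachieved (n * p) p S))
           \<le> n * min 1 (3 * p / (card (gamma (n * p) p S) * L))"
proof -
  define u where "u = card (unachieved (n * p) p S)"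
  define g where "g = card (gamma (n * p) p S)"
  have "0 < p / L"
    using p_pos assms(3) by simp
  then have "0 < u"
    using many by (simp add: u_def)
  then obtain l where "l \<in> unachieved (n * p) p S"
    by (metis u_def card.empty all_not_in_conv less_irrefl)
  then have "{n * l..<n * l + n} \<subseteq> gamma (n * p) p S"
    by (rule block_subset_gamma[OF assms(1)])
  \<comment> \<open>Needed: for an empty gamma the sampling probability would be min 1 (3 p / 0) = 0.\<close>
  then have "0 < g"
    using assms(2) finite_gamma unfolding g_def
    by (metis card_gt_0_iff atLeastLessThan_empty_iff2 less_add_same_cancel1 subset_empty)
  have "real g \<le> 4 * real n * real u"
    using of_nat_mono[OF card_gamma_le[OF assms(1,2)]] by (simp add: g_def u_def)
  have "3 * (p / L) / (4 * u) = 3 * p * n / ((4 * n * u) * L)"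
    using assms(2) by simp
  also have "\<dots> \<le> 3 * p * n / (g * L)"
    using \<open>0 < g\<close> \<open>real g \<le> 4 * real n * real u\<close> \<open>0 < u\<close> assms(2,3)
    by (intro divide_left_mono mult_right_mono) auto
  also have "\<dots> = n * (3 * p / (g * L))"
    by simp
  finally have "3 * (p / L) / (4 * u) \<le> n * (3 * p / (g * L))" .
  moreover have "3 * (p / L) / (4 * u) \<le> n"
  proof -
    have "(p / L) / u \<le> 1"
      using many \<open>0 < u\<close> by (simp add: u_def divide_le_eq_1 del: divide_divide_eq_left)
    then show ?thesis
      using assms(2) by (simp add: field_simps)
  qed
  ultimately show ?thesis
    by (simp add: u_def g_def min_def)
qed

end

lemma set_pmf_hp_round: "set_pmf (hp_round N p S) \<subseteq> {S'. S \<subseteq> S' \<and> S' \<subseteq> S \<union> gamma N p S}"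
  unfolding hp_round_def Let_def by auto

lemma finite_set_pmf_hp_rounds: "S \<in> set_pmf (hp_rounds N p j) \<Longrightarrow> finite S"
proof (induction j arbitrary: S)
  case (Suc j)
  then obtain S0 where "S0 \<in> set_pmf (hp_rounds N p j)" and "S \<in> set_pmf (hp_round N p S0)"
    by auto
  then have "finite S0" and "S \<subseteq> S0 \<union> gamma N p S0"
    using Suc.IH set_pmf_hp_round by blast+
  then show ?case
    using finite_gamma finite_subset by blast
qed simp

lemma card_unachieved_hp_round_le:
  assumes "S' \<in> set_pmf (hp_round N p S)"
  shows "card (unachieved N p S') \<le> card (unachieved N p S)"
proof -
  have "S \<subseteq> S'"
    using assms set_pmf_hp_round by blast
  then show ?thesis
    by (intro card_mono unachieved_antimono) (simp add: unachieved_def)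
qed

lemma hp_round_progress_failure_le:
  fixes n p :: nat
  defines "L \<equiv> real (logstar (real p))"
  assumes "0 < n" and "1 < p" and "finite S"
    and many: "p / L \<le> card (unachieved (n * p) p S)"
  shows "measure_pmf.prob (hp_round (n * p) p S)
           {S'. card (unachieved (n * p) p S) - p / (4 * L) < card (unachieved (n * p) p S')}
         \<le> 64 * L\<^sup>2 / p"
    (is "measure_pmf.prob _ ?bad \<le> _")
proof -
  let ?U = "unachieved (n * p) p S" and ?G = "gamma (n * p) p S"
  define u where "u = real (card ?U)"
  define c where "c = p / L"
  define q where "q = min 1 (3 * real p / (real (card ?G) * L))"
  define \<phi> where "\<phi> f = S \<union> {x \<in> ?G. f x}" for f
  define unsampled where "unsampled f = card {l\<in>?U. \<forall>x\<in>{n * l..<n * l + n}. \<not> f x}" for f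
  define t where "t = c / 8"
  have "0 < p" and "1 \<le> L"
    using \<open>1 < p\<close> logstar_ge_1[of "real p"] by (auto simp: L_def)
  then have "0 < c" and "c \<le> u"
    using many by (simp_all add: c_def u_def)
  have "0 \<le> q" and "q \<le> 1"
    using \<open>1 \<le> L\<close> by (auto simp: q_def)
  have "3 * c / (4 * u) \<le> n * q"
    using sampling_rate_ge[OF \<open>0 < p\<close> \<open>finite S\<close> \<open>0 < n\<close>, of L] \<open>1 \<le> L\<close> many
    by (simp add: c_def u_def q_def)
  then have "u * (1 - q) ^ n \<le> u - 3 * c / 7"
    by (rule mult_one_minus_power_le[OF \<open>0 \<le> q\<close> \<open>q \<le> 1\<close> \<open>0 < c\<close> \<open>c \<le> u\<close>])
  moreover have "p / (4 * L) = c / 4"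
    by (simp add: c_def)
  ultimately have threshold: "u * (1 - q) ^ n + t \<le> u - p / (4 * L)"
    using \<open>0 < c\<close> unfolding t_def by linarith
  have "\<phi> -` ?bad \<subseteq> {f. u * (1 - q) ^ n + t \<le> unsampled f}"
  proof
    fix f assume "f \<in> \<phi> -` ?bad"
    then have "u - p / (4 * L) < card (unachieved (n * p) p (\<phi> f))"
      by (simp add: u_def)
    moreover have "card (unachieved (n * p) p (\<phi> f)) \<le> unsampled f"
      unfolding \<phi>_def unsampled_def
      by (intro card_mono unachieved_after_sampling_subset[OF \<open>0 < p\<close> \<open>finite S\<close>])
         (simp add: unachieved_def)
    ultimately show "f \<in> {f. u * (1 - q) ^ n + t \<le> unsampled f}"
      using threshold by simp
  qed
  then have "measure_pmf.prob (hp_round (n * p) p S) ?bad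
      \<le> measure_pmf.prob (Pi_pmf ?G False (\<lambda>_. bernoulli_pmf q)) {f. u * (1 - q) ^ n + t \<le> unsampled f}"
    by (auto simp: hp_round_def Let_def q_def L_def \<phi>_def[symmetric] intro!: measure_pmf.finite_measure_mono)
  also have "\<dots> \<le> card ?U / t\<^sup>2"
    unfolding u_def unsampled_def
  proof (rule prob_many_blocks_unsampled)
    show "{n * l..<n * l + n} \<subseteq> ?G" if "l \<in> ?U" for l
      using block_subset_gamma[OF \<open>0 < p\<close> \<open>finite S\<close> that] .
    show "{n * l..<n * l + n} \<inter> {n * m..<n * m + n} = {}" if "l \<noteq> m" for l m
      using blocks_disjoint[OF that] .
  qed (use \<open>0 \<le> q\<close> \<open>q \<le> 1\<close> \<open>0 < c\<close> in \<open>simp_all add: t_def finite_gamma unachieved_def\<close>)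
  also have "\<dots> \<le> p / t\<^sup>2"
    using card_unachieved_le by (intro divide_right_mono) auto
  also have "\<dots> = 64 * L\<^sup>2 / p"
    using \<open>0 < p\<close> \<open>1 \<le> L\<close> by (simp add: t_def c_def field_simps power2_eq_square)
  finally show ?thesis .
qed

lemma hp_round_failure_le:
  fixes n p :: nat and a :: real
  defines "L \<equiv> real (logstar (real p))"
  assumes "0 < n" and "1 < p" and "finite S"
    and good: "card (unachieved (n * p) p S) \<le> a \<or> card (unachieved (n * p) p S) < p / L"
  shows "measure_pmf.prob (hp_round (n * p) p S)
           {S'. a - p / (4 * L) < card (unachieved (n * p) p S') \<and> p / L \<le> card (unachieved (n * p) p S')}
         \<le> 64 * L\<^sup>2 / p"
    (is "measure_pmf.prob _ ?bad \<le> _")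
proof (cases "card (unachieved (n * p) p S) < p / L")
  case True
  then have "measure_pmf.prob (hp_round (n * p) p S) ?bad = 0"
    unfolding measure_pmf_zero_iff using card_unachieved_hp_round_le by fastforce
  then show ?thesis
    by simp
next
  case False
  then have "?bad \<subseteq> {S'. card (unachieved (n * p) p S) - p / (4 * L) < card (unachieved (n * p) p S')}"
    using good by auto
  then have "measure_pmf.prob (hp_round (n * p) p S) ?bad
      \<le> measure_pmf.prob (hp_round (n * p) p S)
           {S'. card (unachieved (n * p) p S) - p / (4 * L) < card (unachieved (n * p) p S')}"
    by (intro measure_pmf.finite_measure_mono) auto
  also have "\<dots> \<le> 64 * L\<^sup>2 / p"
    using hp_round_progress_failure_le[OF \<open>0 < n\<close> \<open>1 < p\<close> \<open>finite S\<close>] False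
    unfolding L_def by simp
  finally show ?thesis .
qed

lemma hp_rounds_failure_le:
  fixes n p j :: nat
  defines "L \<equiv> real (logstar (real p))"
  assumes "0 < n" and "1 < p"
  shows "measure_pmf.prob (hp_rounds (n * p) p j)
           {S. p - j * (p / (4 * L)) < card (unachieved (n * p) p S) \<and> p / L \<le> card (unachieved (n * p) p S)}
         \<le> j * (64 * L\<^sup>2 / p)"
proof (rule prob_drift_failure_le[where K = "hp_round (n * p) p" and V = "\<lambda>S. card (unachieved (n * p) p S)"])
  fix j S and b :: real
  assume "S \<in> set_pmf (hp_rounds (n * p) p j)"
    and "card (unachieved (n * p) p S) \<le> b \<or> card (unachieved (n * p) p S) < p / L"
  then show "measure_pmf.prob (hp_round (n * p) p S)
      {S'. b - p / (4 * L) < card (unachieved (n * p) p S') \<and> p / L \<le> card (unachieved (n * p) p S')}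
      \<le> 64 * L\<^sup>2 / p"
    using hp_round_failure_le[OF \<open>0 < n\<close> \<open>1 < p\<close> finite_set_pmf_hp_rounds]
    unfolding L_def by blast
qed (use card_unachieved_le in auto)

lemma hp_rounds_success_ge:
  fixes n p :: nat
  assumes "0 < n" and "1 < p"
  shows "1 - 256 * (log 2 p + 1) ^ 3 / p
    \<le> measure_pmf.prob (hp_rounds (n * p) p (nat \<lceil>4 * real (logstar (real p))\<rceil>))
          {S. card (unachieved (n * p) p S) < p / logstar (real p)}"
proof -
  define L where "L = real (logstar (real p))"
  define k where "k = 4 * logstar (real p)"
  let ?M = "hp_rounds (n * p) p k"
  have "1 \<le> L" and "L \<le> log 2 p + 1"
    using \<open>1 < p\<close> logstar_ge_1[of "real p"] logstar_le_log[of "real p"] by (auto simp: L_def)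
  have "4 * real (logstar (real p)) = real k"
    by (simp add: k_def)
  then have k: "nat \<lceil>4 * real (logstar (real p))\<rceil> = k"
    by simp
  have "p - k * (p / (4 * L)) = 0"
    using \<open>1 \<le> L\<close> by (simp add: k_def L_def)
  have "0 < p / L"
    using \<open>1 < p\<close> \<open>1 \<le> L\<close> by simp
  then have good: "{S. card (unachieved (n * p) p S) < p / L}
      = UNIV - {S. p - k * (p / (4 * L)) < card (unachieved (n * p) p S) \<and> p / L \<le> card (unachieved (n * p) p S)}"
    unfolding \<open>p - k * (p / (4 * L)) = 0\<close> by auto
  have "L ^ 3 \<le> (log 2 p + 1) ^ 3"
    using \<open>1 \<le> L\<close> \<open>L \<le> log 2 p + 1\<close> by (intro power_mono) auto
  moreover have "k * (64 * L\<^sup>2 / p) = 256 * L ^ 3 / p"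
    by (simp add: k_def L_def power2_eq_square power3_eq_cube)
  ultimately have "1 - 256 * (log 2 p + 1) ^ 3 / p \<le> 1 - k * (64 * L\<^sup>2 / p)"
    using divide_right_mono[of "256 * L ^ 3" "256 * (log 2 p + 1) ^ 3" p] by linarith
  also have "\<dots> \<le> 1 - measure_pmf.prob ?M
      {S. p - k * (p / (4 * L)) < card (unachieved (n * p) p S) \<and> p / L \<le> card (unachieved (n * p) p S)}"
    using hp_rounds_failure_le[OF assms, of k] by (simp add: L_def)
  also have "\<dots> = measure_pmf.prob ?M {S. card (unachieved (n * p) p S) < p / L}"
    unfolding good using measure_pmf.prob_compl[of _ ?M] by simp
  finally show ?thesis
    by (simp add: k L_def)
qed

lemma hp_rounds_success_tendsto:
  fixes N :: "nat \<Rightarrow> nat"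
  assumes N: "\<forall>p>0. p dvd N p \<and> N p > 0"
  shows "((\<lambda>p. measure_pmf.prob (hp_rounds (N p) p (nat \<lceil>4 * real (logstar (real p))\<rceil>))
            {S. card (unachieved (N p) p S) < p / logstar (real p)}) \<longlongrightarrow> 1) at_top"
proof (rule tendsto_sandwich[OF _ _ _ tendsto_const])
  show "((\<lambda>p::nat. 1 - 256 * (log 2 p + 1) ^ 3 / p) \<longlongrightarrow> 1) at_top"
    by real_asymp
  show "\<forall>\<^sub>F p in at_top. 1 - 256 * (log 2 p + 1) ^ 3 / p
      \<le> measure_pmf.prob (hp_rounds (N p) p (nat \<lceil>4 * real (logstar (real p))\<rceil>))
           {S. card (unachieved (N p) p S) < p / logstar (real p)}"
  proof (rule eventually_mono[OF eventually_gt_at_top[of 1]])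
    fix p :: nat
    assume "1 < p"
    then have "N p = (N p div p) * p" and "0 < N p"
      using N by auto
    then have "0 < N p div p"
      by (metis gr0I mult_zero_left)
    then show "1 - 256 * (log 2 p + 1) ^ 3 / p
      \<le> measure_pmf.prob (hp_rounds (N p) p (nat \<lceil>4 * real (logstar (real p))\<rceil>))
           {S. card (unachieved (N p) p S) < p / logstar (real p)}"
      using hp_rounds_success_ge[OF _ \<open>1 < p\<close>] \<open>N p = (N p div p) * p\<close> by metis
  qed
qed simp

theorem lemma2p4:
  "\<exists>C>0. \<forall>N :: nat \<Rightarrow> nat. (\<forall>p>0. p dvd N p \<and> N p > 0) \<longrightarrow>
     ((\<lambda>p. measure_pmf.prob (hp_rounds (N p) p (nat \<lceil>C * real (logstar (real p))\<rceil>))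
        {S. real (card (unachieved (N p) p S)) < real p / real (logstar (real p))})
      \<longlongrightarrow> 1) at_top"
  using hp_rounds_success_tendsto by (intro exI[of _ 4]) simp

end
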